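(* Let $n=5$ and let $\mathcal{K}=\{1,2,3\}$. For every channel matrix $\boldsymbol{D}=(d_{ji})_{j,i\in\mathcal{K}}$ whose entries are monomials $d_{ji}=x^{k_{ji}}$ ($k_{ji}\in\mathbb{N}$), there is no choice of transmission offsets $p_{ji}\in\{0,1,\dots,4\}$, $i,j\in\mathcal{K}$ (one message $W_{ji}$ per transmitter–receiver pair, i.e. $m_{ji}=1$), such that all separability conditions (S1), (S2), (S3) hold simultaneously. In other words, perfect Cyclic Interference Alignment achieving $\frac{9}{5}$ degrees of freedom with $n=5$ dimensions is infeasible on the $3$-user $X$-network.
   Context: Cyclic polynomial channel model of the $3$-user $X$-network. Fix $n\in\mathbb{N}$; all congruences are taken in the polynomial ring modulo $x^n-1$, so $x^a\equiv x^b \pmod{x^n-1}$ iff $a\equiv b \pmod n$. Let $\mathcal{K}=\{1,2,3\}$. Transmitter $\mathrm{Tx}_i$ holds one message $W_{ji}$ for each receiver $\mathrm{Rx}_j$ ($9$ messages in total), each message being an element of an abelian group (binary strings of length $t$). $\mathrm{Tx}_i$ chooses offsets $p_{ji}\in\{0,\dots,n-1\}$ and transmits $u_i(x)\equiv\sum_{j\in\mathcal{K}}W_{ji}x^{p_{ji}}$. The channel matrix is $\boldsymbol{D}=(d_{ji})$ with each $d_{ji}$ a monomial $x^{k}$, $k\in\mathbb{N}$ (a cyclic shift), known to all users. Receiver $\mathrm{Rx}_j$ observes $r_j(x)\equiv\sum_{i\in\mathcal{K}}d_{ji}u_i(x)$, whose coefficient at $x^m$ is the sum of all messages arriving at offset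 $m$. At $\mathrm{Rx}_a$ the dedicated signals are $d_{al}x^{p_{al}}$ ($l\in\mathcal{K}$) and the interfering signals are $d_{al}x^{p_{bl}}$ with $l\in\mathcal{K}$, $b\ne a$. Separability conditions: (S1) intra-user: for each $i$, $x^{p_{1i}},x^{p_{2i}},x^{p_{3i}}$ are pairwise incongruent; (S2) multiple-access: for each $a$, the three dedicated signals $d_{a1}x^{p_{a1}},d_{a2}x^{p_{a2}},d_{a3}x^{p_{a3}}$ are pairwise incongruent; (S3) inter-user: for each $a$, every dedicated signal at $\mathrm{Rx}_a$ is incongruent to every interfering signal at $\mathrm{Rx}_a$. A message is received interference-free if it occupies an offset at its intended receiver containing no other message; the degrees of freedom are $M/n$ with $M$ the number of dedicated messages received interference-free. *)

theory Defs
  imports "HOL-Number_Theory.Cong"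
begin

text \<open>Cyclic polynomial model: a monomial x^a is represented by its exponent a,
  and x^a \<equiv> x^b (mod x^n - 1) iff a \<equiv> b (mod n).
  A channel matrix D = (d_ji) with d_ji = x^(k j i) is represented by k.
  Multiplying d_al = x^(k a l) by x^(p b l) gives exponent k a l + p b l.\<close>

definition users :: "nat set" where
  "users = {1, 2, 3}"

definition mono_cong :: "nat \<Rightarrow> nat \<Rightarrow> nat \<Rightarrow> bool" where
  "mono_cong n a b \<longleftrightarrow> [a = b] (mod n)"

definition sep_intra :: "nat \<Rightarrow> (nat \<Rightarrow> nat \<Rightarrow> nat) \<Rightarrow> bool" where
  "sep_intra n p \<longleftrightarrow>
     (\<forall>i\<in>users. \<forall>j\<in>users. \<forall>j'\<in>users. j \<noteq> j' \<longrightarrow> \<not> mono_cong n (p j i) (p j' i))"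

definition sep_mac :: "nat \<Rightarrow> (nat \<Rightarrow> nat \<Rightarrow> nat) \<Rightarrow> (nat \<Rightarrow> nat \<Rightarrow> nat) \<Rightarrow> bool" where
  "sep_mac n k p \<longleftrightarrow>
     (\<forall>a\<in>users. \<forall>l\<in>users. \<forall>l'\<in>users. l \<noteq> l' \<longrightarrow>
        \<not> mono_cong n (k a l + p a l) (k a l' + p a l'))"

definition sep_inter :: "nat \<Rightarrow> (nat \<Rightarrow> nat \<Rightarrow> nat) \<Rightarrow> (nat \<Rightarrow> nat \<Rightarrow> nat) \<Rightarrow> bool" where
  "sep_inter n k p \<longleftrightarrow>
     (\<forall>a\<in>users. \<forall>l\<in>users. \<forall>l'\<in>users. \<forall>b\<in>users. b \<noteq> a \<longrightarrow>
        \<not> mono_cong n (k a l + p a l) (k a l' + p b l'))"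

end

theory Submission
  imports Defs "HOL-Library.Numeral_Type"
begin

(*
  Work with residues in Z/5. At receiver a the three dedicated signals occupy three residues,
  so the six interfering signals share the remaining two; as the two interfering messages of
  one transmitter l are distinct by (S1), they fill both. Hence for transmitters l, l' the
  interference pair of l is a translate of that of l': either both offsets move by the same
  shift, which (S2) forbids for the dedicated offset, or they are swapped, which gives
  p_bl + p_bl' = p_cl + p_cl'. Two receivers cannot both be in the shift case, so
  p_2l + p_2l' = p_3l + p_3l' for all l \<noteq> l'; combining the three pairs of transmitters
  yields 2 p_23 = 2 p_33, contradicting (S1).
*)

lemma doubleton_eq_of_card_eq_2:
  assumes "card A = 2" "u \<in> A" "v \<in> A" "u \<noteq> v"
  shows "{u, v} = A"
proof (rule card_subset_eq)
  show "finite A" using assms(1) card.infinite by fastforce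
qed (use assms in auto)

lemma translated_doubletons_eq_cases:
  fixes t y z t' y' z' :: "'a::ab_group_add"
  assumes "{t + y, t + z} = {t' + y', t' + z'}"
  shows "(y' - y = t - t' \<and> z' - z = t - t') \<or> y + y' = z + z'"
  using assms unfolding doubleton_eq_iff
proof
  assume "t + y = t' + z' \<and> t + z = t' + y'"
  then have "(t + y) + (t' + y') = (t' + z') + (t + z)" by simp
  then show ?thesis by (simp add: algebra_simps)
qed (auto simp: algebra_simps)

lemma mono_cong_5_iff: "mono_cong 5 a b \<longleftrightarrow> (of_nat a :: 5) = of_nat b"
  by (simp add: mono_cong_def of_nat_eq_iff_cong_CHAR)

lemma two_mult_eq_0_5: "2 * u = (0 :: 5) \<Longrightarrow> u = 0"
proof -
  assume "2 * u = 0"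
  have "(3 * 2 :: 5) = 1" by simp
  then have "u = 3 * (2 * u)" by (metis mult.assoc mult_1)
  with \<open>2 * u = 0\<close> show "u = 0" by simp
qed

locale separable_residues =
  fixes d p :: "nat \<Rightarrow> nat \<Rightarrow> 5"
  assumes intra: "\<lbrakk>i \<in> users; j \<in> users; j' \<in> users; j \<noteq> j'\<rbrakk> \<Longrightarrow> p j i \<noteq> p j' i"
    and mac: "\<lbrakk>a \<in> users; l \<in> users; l' \<in> users; l \<noteq> l'\<rbrakk> \<Longrightarrow> d a l + p a l \<noteq> d a l' + p a l'"
    and inter: "\<lbrakk>a \<in> users; b \<in> users; l \<in> users; l' \<in> users; b \<noteq> a\<rbrakk>
      \<Longrightarrow> d a l + p a l \<noteq> d a l' + p b l'"
begin

definition dedicated :: "nat \<Rightarrow> 5 set" where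
  "dedicated a = (\<lambda>l. d a l + p a l) ` users"

lemma card_Compl_dedicated:
  assumes "a \<in> users"
  shows "card (- dedicated a) = 2"
proof -
  have "inj_on (\<lambda>l. d a l + p a l) users" using mac[OF assms] by (auto intro: inj_onI)
  then have "card (dedicated a) = 3" by (simp add: dedicated_def card_image users_def)
  then show ?thesis by (simp add: Compl_eq_Diff_UNIV card_Diff_subset)
qed

lemma interference_eq_Compl_dedicated:
  assumes "a \<in> users" "b \<in> users" "b' \<in> users" "b \<noteq> a" "b' \<noteq> a" "b \<noteq> b'" "l \<in> users"
  shows "{d a l + p b l, d a l + p b' l} = - dedicated a"
proof (rule doubleton_eq_of_card_eq_2)
  show "card (- dedicated a) = 2" using card_Compl_dedicated[OF assms(1)] .
  show "d a l + p b l \<noteq> d a l + p b' l" using intra assms by simp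
qed (use inter[THEN not_sym] assms in \<open>auto simp: dedicated_def\<close>)

lemma receiver_alternative:
  assumes "a \<in> users" "b \<in> users" "b' \<in> users" "b \<noteq> a" "b' \<noteq> a" "b \<noteq> b'"
    and "l \<in> users" "l' \<in> users" "l \<noteq> l'"
  shows "(p b l' - p b l = p b' l' - p b' l \<and> p a l' - p a l \<noteq> p b l' - p b l)
    \<or> p b l + p b l' = p b' l + p b' l'"
proof -
  have "{d a l + p b l, d a l + p b' l} = {d a l' + p b l', d a l' + p b' l'}"
    using interference_eq_Compl_dedicated assms by simp
  moreover have "p a l' - p a l \<noteq> d a l - d a l'"
    using mac[of a l l'] assms by (auto simp: algebra_simps)
  ultimately show ?thesis by (auto dest: translated_doubletons_eq_cases)
qed

lemma offset_sums_2_3: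
  assumes "l \<in> users" "l' \<in> users" "l \<noteq> l'"
  shows "p 2 l + p 2 l' = p 3 l + p 3 l'"
proof -
  have u: "1 \<in> users" "2 \<in> users" "3 \<in> users" by (simp_all add: users_def)
  \<comment> \<open>two receivers in the shift case would impose contradictory offset differences\<close>
  show ?thesis
    using receiver_alternative[OF u(1) u(2) u(3) _ _ _ assms]
      receiver_alternative[OF u(2) u(1) u(3) _ _ _ assms]
      receiver_alternative[OF u(3) u(1) u(2) _ _ _ assms]
    by auto
qed

end

lemma no_separable_residues: "\<not> separable_residues d p"
proof
  assume "separable_residues d p"
  then interpret separable_residues d p .
  have u: "1 \<in> users" "2 \<in> users" "3 \<in> users" by (simp_all add: users_def)
  have "2 * (p 2 3 - p 3 3)
      = (p 2 1 + p 2 3 - (p 3 1 + p 3 3)) + (p 2 2 + p 2 3 - (p 3 2 + p 3 3))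
        - (p 2 1 + p 2 2 - (p 3 1 + p 3 2))"
    by (simp add: algebra_simps)
  also have "\<dots> = 0" using offset_sums_2_3 u by simp
  finally have "p 2 3 - p 3 3 = 0" by (rule two_mult_eq_0_5)
  with intra[OF u(3) u(2) u(3)] show False by simp
qed

lemma separable_residues_of_nat:
  assumes "sep_intra 5 p" "sep_mac 5 k p" "sep_inter 5 k p"
  shows "separable_residues (\<lambda>a l. of_nat (k a l)) (\<lambda>j i. of_nat (p j i))"
  using assms unfolding separable_residues_def sep_intra_def sep_mac_def sep_inter_def
    mono_cong_5_iff of_nat_add
  by blast

theorem theorem1:
  fixes k :: "nat \<Rightarrow> nat \<Rightarrow> nat"
  shows "\<not> (\<exists>p :: nat \<Rightarrow> nat \<Rightarrow> nat.
            (\<forall>j\<in>users. \<forall>i\<in>users. p j i < 5) \<and>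
            sep_intra 5 p \<and> sep_mac 5 k p \<and> sep_inter 5 k p)"
  using separable_residues_of_nat no_separable_residues by blast

end
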